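(* For fixed $p\in(\tfrac12,1)$, as $n\to\infty$, $$\frac{\tilde T_n^p-np}{\sqrt n}\Rightarrow N(0,p(1-p)).$$
   Context: For $n\ge2$, $p\in(0,1)$, $\tilde\Omega_n^p$ is the probability space of strings $\omega\in\{0,1\}^n$ with $\omega_1=0$, $\omega_n=1$ and $\omega_2,\dots,\omega_{n-1}$ independent, each $1$ with probability $p$ and $0$ with probability $1-p$. One step of the evolution replaces simultaneously every occurrence of the consecutive substring "01" by "10"; $\tilde T_n^p(\omega)$ is the number of steps needed to reach a string of the form $1\cdots10\cdots0$. $\Rightarrow$ is convergence in distribution; $N(0,\sigma^2)$ is a centered Gaussian with variance $\sigma^2$. *)

theory Defs
  imports "HOL-Probability.Probability"
begin

text \<open>A binary string of length n is encoded as a function nat => bool on positions 1..n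
  (True = 1, False = 0); positions outside 1..n are False.\<close>

text \<open>One step: every occurrence of 01 at positions (i, i+1) is replaced simultaneously by 10.\<close>
definition step :: "nat \<Rightarrow> (nat \<Rightarrow> bool) \<Rightarrow> (nat \<Rightarrow> bool)" where
  "step n \<omega> i =
     (if 1 \<le> i \<and> i \<le> n then
        (if \<not> \<omega> i \<and> i < n \<and> \<omega> (i + 1) then True
         else if \<omega> i \<and> 1 < i \<and> \<not> \<omega> (i - 1) then False
         else \<omega> i)
      else \<omega> i)"

definition is_sorted_str :: "nat \<Rightarrow> (nat \<Rightarrow> bool) \<Rightarrow> bool" where
  "is_sorted_str n \<omega> \<longleftrightarrow> (\<exists>j\<le>n. \<forall>i\<in>{1..n}. \<omega> i = (i \<le> j))"

definition T_steps :: "nat \<Rightarrow> (nat \<Rightarrow> bool) \<Rightarrow> nat" where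
  "T_steps n \<omega> = (LEAST k. is_sorted_str n ((step n ^^ k) \<omega>))"

definition strings_pmf :: "nat \<Rightarrow> real \<Rightarrow> (nat \<Rightarrow> bool) pmf" where
  "strings_pmf n p =
     map_pmf (\<lambda>\<omega>. fun_upd (fun_upd \<omega> 1 False) n True) (Pi_pmf {2..<n} False (\<lambda>_. bernoulli_pmf p))"

end

theory Submission
  imports Defs "HOL-Real_Asymp.Real_Asymp"
begin

text \<open>Let h(m) be the number of zeros among the first m letters. One step of the dynamics acts on
  this profile (suitably extended beyond the string) by the max-plus recursion
  h'(m) = max(h(m - 1), h(m + 1) - 1), so after t steps
  h_t(m) = max_{j \<le> t} (h(m - t + 2j) - j). Consequently the sorting time T lies between the number K
  of ones and K + max_i S_i, where S_i = 2 h(i) - i. For p > 1/2 the walk S drifts to -\<infinity>: with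
  r = p / (1 - p) every r^{S_i} has mean r, so by Markov's inequality and a union bound
  max_i S_i \<le> n^{1/4} outside an event of probability at most n r^{1 - n^{1/4}}. Hence the
  characteristic functions of (T - np)/\<surd>n and (K - np)/\<surd>n have the same limit, and since K - 1 is
  binomial with parameters n - 2 and p, that limit is the Gaussian one; Levy's continuity theorem
  concludes.\<close>

section \<open>Sorting time and the zero profile\<close>

fun zero_count :: "(nat \<Rightarrow> bool) \<Rightarrow> nat \<Rightarrow> nat" where
  "zero_count \<omega> 0 = 0"
| "zero_count \<omega> (Suc m) = zero_count \<omega> m + (if \<omega> (Suc m) then 0 else 1)"

lemma step_Suc:
  assumes "Suc i \<le> n"
  shows "step n \<omega> (Suc i) =
     (if \<not> \<omega> (Suc i) \<and> Suc i < n \<and> \<omega> (Suc (Suc i)) then True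
      else if \<omega> (Suc i) \<and> 0 < i \<and> \<not> \<omega> i then False else \<omega> (Suc i))"
proof -
  have "1 \<le> Suc i \<and> Suc i \<le> n" "Suc i + 1 = Suc (Suc i)" "Suc i - 1 = i" "(1 < Suc i) = (0 < i)"
    using assms by auto
  then show ?thesis by (simp only: step_def simp_thms if_True)
qed

lemma zero_count_step:
  assumes "m \<le> n"
  shows "int (zero_count (step n \<omega>) m) =
           int (zero_count \<omega> m) - (if 0 < m \<and> m < n \<and> \<not> \<omega> m \<and> \<omega> (Suc m) then 1 else 0)"
  using assms
proof (induction m)
  case (Suc m)
  have IH: "int (zero_count (step n \<omega>) m) = int (zero_count \<omega> m) - (if 0 < m \<and> \<not> \<omega> m \<and> \<omega> (Suc m) then 1 else 0)"
    using Suc by simp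
  show ?case
    unfolding zero_count.simps of_nat_add using IH step_Suc[OF Suc.prems, of \<omega>]
    by (cases "\<omega> m"; cases "\<omega> (Suc m)"; cases "\<omega> (Suc (Suc m))"; cases "Suc m < n"; cases "m = 0") simp_all
qed simp

lemma zero_count_mono: "i \<le> j \<Longrightarrow> zero_count \<omega> i \<le> zero_count \<omega> j"
  by (induction j) (auto simp: le_Suc_eq)

lemma zero_count_le_add_diff: "i \<le> j \<Longrightarrow> zero_count \<omega> j \<le> zero_count \<omega> i + (j - i)"
  by (induction j) (auto simp: le_Suc_eq Suc_diff_le)

lemma zero_count_le: "zero_count \<omega> i \<le> i"
  using zero_count_le_add_diff[of 0 i \<omega>] by simp

lemma zero_count_funpow_step: "zero_count ((step n ^^ t) \<omega>) n = zero_count \<omega> n"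
  by (induction t) (use zero_count_step[of n n] in auto)

lemma zero_count_sorted:
  assumes "\<forall>i\<in>{1..n}. \<omega> i = (i \<le> j)" and "m \<le> n"
  shows "zero_count \<omega> m = m - j"
  using assms(2) by (induction m) (use assms(1) in auto)

text \<open>The zero-count profile extended to all of \<int>: constant 0 to the left of the string
  and of slope 1 to the right of it, as if the string continued with zeros.\<close>
definition height :: "nat \<Rightarrow> (nat \<Rightarrow> bool) \<Rightarrow> int \<Rightarrow> int" where
  "height n \<omega> m =
     (if m \<le> 0 then 0
      else if m \<le> int n then int (zero_count \<omega> (nat m))
      else int (zero_count \<omega> n) + (m - int n))"

lemma height_of_nat: "j \<le> n \<Longrightarrow> height n \<omega> (int j) = int (zero_count \<omega> j)"
  by (simp add: height_def)

lemma height_step: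
  assumes "n \<ge> 1"
  shows "height n (step n \<omega>) m = max (height n \<omega> (m - 1)) (height n \<omega> (m + 1) - 1)"
proof -
  have zn: "zero_count (step n \<omega>) n = zero_count \<omega> n"
    using zero_count_step[of n n \<omega>] by simp
  consider "m \<le> 0" | "1 \<le> m \<and> m < int n" | "m = int n" | "m > int n"
    by linarith
  then show ?thesis
  proof cases
    case 1
    then show ?thesis
      using zero_count_le[of \<omega> 1] height_of_nat[of 1 n \<omega>] assms
      by (cases "m = 0") (auto simp: height_def)
  next
    case 2
    define k where "k = nat m - 1"
    have k: "m = int (Suc k)" "Suc k < n"
      using 2 by (auto simp: k_def)
    have "m - 1 = int k" "m + 1 = int (Suc (Suc k))"
      using k by simp_all
    then have "height n (step n \<omega>) m = int (zero_count (step n \<omega>) (Suc k))"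
      and "height n \<omega> (m - 1) = int (zero_count \<omega> k)"
      and "height n \<omega> (m + 1) = int (zero_count \<omega> (Suc (Suc k)))"
      using k(2) unfolding k(1) by (simp_all only: height_of_nat less_imp_le Suc_leI)
    then show ?thesis
      using zero_count_step[of "Suc k" n \<omega>] k
      by (cases "\<omega> (Suc k)"; cases "\<omega> (Suc (Suc k))") auto
  next
    case 3
    have "height n \<omega> (m - 1) = int (zero_count \<omega> (n - 1))"
      using 3 assms height_of_nat[of "n - 1" n \<omega>] by (simp add: of_nat_diff)
    moreover have "zero_count \<omega> (n - 1) \<le> zero_count \<omega> n"
      by (rule zero_count_mono) simp
    ultimately show ?thesis
      using 3 zn by (simp add: height_def)
  next
    case 4
    then show ?thesis
      using zn height_of_nat[of n n \<omega>] by (cases "m = int n + 1") (auto simp: height_def)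
  qed
qed

lemma height_funpow_step_le:
  assumes "n \<ge> 1" and "\<forall>j\<le>t. height n \<omega> (m - int t + 2 * int j) - int j \<le> U"
  shows "height n ((step n ^^ t) \<omega>) m \<le> U"
  using assms(2)
proof (induction t arbitrary: m U)
  case (Suc t)
  have "height n ((step n ^^ t) \<omega>) (m - 1) \<le> U"
  proof (rule Suc.IH, intro allI impI)
    fix j assume "j \<le> t"
    then show "height n \<omega> (m - 1 - int t + 2 * int j) - int j \<le> U"
      using Suc.prems[rule_format, of j] by (simp add: algebra_simps)
  qed
  moreover have "height n ((step n ^^ t) \<omega>) (m + 1) \<le> U + 1"
  proof (rule Suc.IH, intro allI impI)
    fix j assume "j \<le> t"
    then show "height n \<omega> (m + 1 - int t + 2 * int j) - int j \<le> U + 1"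
      using Suc.prems[rule_format, of "Suc j"] by (simp add: algebra_simps)
  qed
  ultimately show ?case
    using height_step[OF assms(1)] by simp
qed simp

lemma height_funpow_step_ge:
  assumes "n \<ge> 1"
  shows "height n \<omega> (m - int t) \<le> height n ((step n ^^ t) \<omega>) m"
proof (induction t arbitrary: m)
  case (Suc t)
  then have "height n \<omega> (m - 1 - int t) \<le> height n ((step n ^^ t) \<omega>) (m - 1)" .
  then show ?case
    using height_step[OF assms] by (simp add: algebra_simps)
qed simp

definition zero_walk :: "(nat \<Rightarrow> bool) \<Rightarrow> nat \<Rightarrow> int" where
  "zero_walk \<omega> i = 2 * int (zero_count \<omega> i) - int i"

lemma is_sorted_str_if_zero_count_le:
  assumes K: "K \<le> n" and zn: "zero_count \<omega> n = n - K"
    and le: "\<forall>m\<in>{1..n}. int (zero_count \<omega> m) \<le> max 0 (int m - int K)"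
  shows "is_sorted_str n \<omega>"
  unfolding is_sorted_str_def
proof (intro exI[of _ K] conjI ballI K)
  fix i assume i: "i \<in> {1..n}"
  show "\<omega> i = (i \<le> K)"
  proof (cases "i \<le> K")
    case True
    then show ?thesis
      using le[rule_format, OF i] i by (cases i) (auto split: if_splits)
  next
    case False
    have "zero_count \<omega> n \<le> zero_count \<omega> i + (n - i)"
      using zero_count_le_add_diff i by simp
    then have "int (zero_count \<omega> i) \<ge> int i - int K"
      using K zn i by (auto simp: of_nat_diff)
    moreover obtain i' where i': "i = Suc i'"
      using i by (cases i) auto
    moreover have "int (zero_count \<omega> i') \<le> int i' - int K"
      using le[rule_format, of i'] i i' False by (cases "i' = 0") auto
    ultimately show ?thesis
      using False by (auto split: if_splits)
  qed
qed

lemma zero_count_funpow_step_le: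
  assumes "n \<ge> 1" and walk: "\<forall>i\<in>{1..n}. zero_walk \<omega> i \<le> int B" and "m \<le> n"
  defines "K \<equiv> n - zero_count \<omega> n"
  shows "int (zero_count ((step n ^^ (K + B)) \<omega>) m) \<le> max 0 (int m - int K)"
proof -
  define t where "t = K + B"
  have K: "int (zero_count \<omega> n) = int n - int K"
    using zero_count_le[of \<omega> n] by (simp add: K_def of_nat_diff)
  have "height n ((step n ^^ t) \<omega>) (int m) \<le> max 0 (int m - int K)"
  proof (rule height_funpow_step_le[OF assms(1)], intro allI impI)
    fix j assume j: "j \<le> t"
    define i where "i = int m - int t + 2 * int j"
    consider "i \<le> 0" | "1 \<le> i \<and> i \<le> int n" | "i > int n"
      by linarith
    then show "height n \<omega> (int m - int t + 2 * int j) - int j \<le> max 0 (int m - int K)"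
    proof cases
      case 1
      then show ?thesis
        by (simp add: height_def i_def[symmetric])
    next
      case 2
      then have "nat i \<in> {1..n}"
        by auto
      then have "zero_walk \<omega> (nat i) \<le> int B"
        using walk by blast
      then show ?thesis
        using 2 by (simp add: height_def zero_walk_def i_def[symmetric]) (simp add: i_def t_def)
    next
      case 3
      then have "height n \<omega> i = int (zero_count \<omega> n) + (i - int n)"
        by (simp add: height_def)
      then show ?thesis
        using K j unfolding i_def t_def by linarith
    qed
  qed
  then show ?thesis
    using height_of_nat[OF assms(3)] by (simp add: t_def)
qed

lemma sorted_after_steps:
  assumes "n \<ge> 1" and "\<forall>i\<in>{1..n}. zero_walk \<omega> i \<le> int B"
  shows "is_sorted_str n ((step n ^^ (n - zero_count \<omega> n + B)) \<omega>)"
  using zero_count_le[of \<omega> n] zero_count_funpow_step_le[OF assms]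
  by (intro is_sorted_str_if_zero_count_le[of "n - zero_count \<omega> n"]) (auto simp: zero_count_funpow_step)

lemma not_sorted_before_steps:
  assumes "n \<ge> 1" and "\<not> \<omega> 1" and t: "t < n - zero_count \<omega> n"
  shows "\<not> is_sorted_str n ((step n ^^ t) \<omega>)"
proof
  define K where "K = n - zero_count \<omega> n"
  let ?\<omega>' = "(step n ^^ t) \<omega>"
  assume "is_sorted_str n ?\<omega>'"
  then obtain j where j: "j \<le> n" "\<forall>i\<in>{1..n}. ?\<omega>' i = (i \<le> j)"
    by (auto simp: is_sorted_str_def)
  have "zero_count \<omega> n = n - j"
    using zero_count_sorted[OF j(2), of n] by (simp add: zero_count_funpow_step)
  then have "j = K"
    using j(1) zero_count_le[of \<omega> n] by (simp add: K_def)
  then have "zero_count ?\<omega>' K = 0"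
    using zero_count_sorted[OF j(2), of K] j(1) by simp
  then have "height n ?\<omega>' (int K) = 0"
    using height_of_nat[of K n ?\<omega>'] by (simp add: K_def)
  moreover have "height n \<omega> (int K - int t) \<le> height n ?\<omega>' (int K)"
    by (rule height_funpow_step_ge[OF assms(1)])
  moreover have "height n \<omega> (int K - int t) = int (zero_count \<omega> (K - t))"
    using t height_of_nat[of "K - t" n \<omega>] by (simp add: K_def of_nat_diff algebra_simps)
  moreover have "zero_count \<omega> 1 \<le> zero_count \<omega> (K - t)"
    using t by (intro zero_count_mono) (simp add: K_def)
  ultimately show False
    using assms(2) by simp
qed

lemma T_steps_bounds:
  assumes "n \<ge> 1" and "\<not> \<omega> 1" and "\<forall>i\<in>{1..n}. zero_walk \<omega> i \<le> int B"
  shows "n - zero_count \<omega> n \<le> T_steps n \<omega>" and "T_steps n \<omega> \<le> n - zero_count \<omega> n + B"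
proof -
  have sorted: "is_sorted_str n ((step n ^^ (n - zero_count \<omega> n + B)) \<omega>)"
    using sorted_after_steps[OF assms(1,3)] .
  then show "T_steps n \<omega> \<le> n - zero_count \<omega> n + B"
    unfolding T_steps_def by (rule Least_le)
  have "is_sorted_str n ((step n ^^ T_steps n \<omega>) \<omega>)"
    unfolding T_steps_def using sorted by (rule LeastI)
  then show "n - zero_count \<omega> n \<le> T_steps n \<omega>"
    using not_sorted_before_steps[of n \<omega>] assms(1,2) by (meson not_le)
qed

section \<open>The zero walk of a random string\<close>

definition pin_ends :: "nat \<Rightarrow> (nat \<Rightarrow> bool) \<Rightarrow> nat \<Rightarrow> bool" where
  "pin_ends n \<eta> = (\<eta>(1 := False))(n := True)"

definition interior_pmf :: "nat \<Rightarrow> real \<Rightarrow> (nat \<Rightarrow> bool) pmf" where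
  "interior_pmf n p = Pi_pmf {2..<n} False (\<lambda>_. bernoulli_pmf p)"

lemma strings_pmf_eq_map_pmf: "strings_pmf n p = map_pmf (pin_ends n) (interior_pmf n p)"
  by (simp add: strings_pmf_def pin_ends_def[abs_def] interior_pmf_def)

lemma distr_strings_pmf:
  "distr (measure_pmf (strings_pmf n p)) borel f = distr (measure_pmf (interior_pmf n p)) borel (f \<circ> pin_ends n)"
  by (simp add: strings_pmf_eq_map_pmf map_pmf_rep_eq distr_distr)

lemma finite_set_interior_pmf: "finite (set_pmf (interior_pmf n p))"
proof (rule finite_subset)
  show "set_pmf (interior_pmf n p) \<subseteq> PiE_dflt {2..<n} False (set_pmf \<circ> (\<lambda>_. bernoulli_pmf p))"
    unfolding interior_pmf_def by (rule set_Pi_pmf_subset') simp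
qed (intro finite_PiE_dflt; simp)

lemma ones_prefix_pin_ends:
  assumes "n \<ge> 2"
  shows "1 \<le> i \<Longrightarrow> i < n \<Longrightarrow> real i - real (zero_count (pin_ends n \<eta>) i) = (\<Sum>k\<in>{2..i}. of_bool (\<eta> k))"
proof (induction i)
  case (Suc i)
  show ?case
  proof (cases "i = 0")
    case False
    then have "{2..Suc i} = insert (Suc i) {2..i}" and "pin_ends n \<eta> (Suc i) = \<eta> (Suc i)"
      using Suc.prems by (auto simp: pin_ends_def)
    then show ?thesis
      using Suc False by simp
  qed (use assms in \<open>simp add: pin_ends_def\<close>)
qed simp

lemma ones_pin_ends:
  assumes "n \<ge> 2"
  shows "real (n - zero_count (pin_ends n \<eta>) n) = 1 + (\<Sum>k\<in>{2..<n}. of_bool (\<eta> k))"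
proof -
  obtain m where m: "n = Suc m" "1 \<le> m"
    using assms by (cases n) auto
  have "zero_count (pin_ends n \<eta>) n = zero_count (pin_ends n \<eta>) m"
    using m by (simp add: pin_ends_def)
  then have "real (n - zero_count (pin_ends n \<eta>) n) = 1 + (real m - real (zero_count (pin_ends n \<eta>) m))"
    using m zero_count_le[of "pin_ends n \<eta>" m] by (simp add: of_nat_diff)
  also have "\<dots> = 1 + (\<Sum>k\<in>{2..m}. of_bool (\<eta> k))"
    using ones_prefix_pin_ends[OF assms m(2)] m by simp
  also have "{2..m} = {2..<n}"
    using m by auto
  finally show ?thesis .
qed

lemma zero_walk_pin_ends:
  assumes "n \<ge> 2" and "1 \<le> i" and "i < n"
  shows "real_of_int (zero_walk (pin_ends n \<eta>) i) = 1 + (\<Sum>k\<in>{2..i}. 1 - 2 * of_bool (\<eta> k))"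
  using ones_prefix_pin_ends[OF assms, of \<eta>] assms(2)
  by (simp add: zero_walk_def sum_subtractf sum_distrib_left[symmetric])

lemma expectation_powr_zero_walk:
  assumes n: "n \<ge> 2" and p: "0 < p" "p < 1" and i: "1 \<le> i" "i < n"
  defines "r \<equiv> p / (1 - p)"
  shows "measure_pmf.expectation (interior_pmf n p) (\<lambda>\<eta>. r powr real_of_int (zero_walk (pin_ends n \<eta>) i)) = r"
proof -
  have r: "r > 0"
    using p by (simp add: r_def)
  define g where "g k b = (if k \<le> i then r powr (1 - 2 * of_bool b) else 1)" for k b
  have "r powr real_of_int (zero_walk (pin_ends n \<eta>) i) = r * (\<Prod>k\<in>{2..<n}. g k (\<eta> k))" for \<eta>
  proof -
    have "(\<Prod>k\<in>{2..<n}. g k (\<eta> k)) = (\<Prod>k\<in>{k\<in>{2..<n}. k \<le> i}. r powr (1 - 2 * of_bool (\<eta> k)))"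
      unfolding g_def by (subst prod.inter_filter[symmetric]) auto
    also have "{k\<in>{2..<n}. k \<le> i} = {2..i}"
      using i by auto
    finally show ?thesis
      using r by (simp add: zero_walk_pin_ends[OF n i] powr_add powr_sum)
  qed
  moreover have "measure_pmf.expectation (interior_pmf n p) (\<lambda>\<eta>. \<Prod>k\<in>{2..<n}. g k (\<eta> k))
      = (\<Prod>k\<in>{2..<n}. measure_pmf.expectation (bernoulli_pmf p) (g k))"
    unfolding interior_pmf_def
    by (rule expectation_prod_Pi_pmf) (auto intro: integrable_measure_pmf_finite simp: g_def)
  moreover have "measure_pmf.expectation (bernoulli_pmf p) (g k) = 1" for k
    using p by (simp add: g_def r_def powr_minus field_simps)
  ultimately show ?thesis
    by simp
qed

lemma prob_zero_walk_gt_le: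
  assumes n: "n \<ge> 2" and p: "1/2 \<le> p" "p < 1" and i: "1 \<le> i" "i < n"
  defines "r \<equiv> p / (1 - p)"
  shows "measure_pmf.prob (interior_pmf n p) {\<eta>. a < real_of_int (zero_walk (pin_ends n \<eta>) i)} \<le> r * r powr (-a)"
proof -
  let ?S = "\<lambda>\<eta>. real_of_int (zero_walk (pin_ends n \<eta>) i)"
  have r: "r \<ge> 1"
    using p by (simp add: r_def)
  have "r powr a \<le> r powr ?S \<eta>" if "a < ?S \<eta>" for \<eta>
    using that r by (intro powr_mono) auto
  then have "measure_pmf.prob (interior_pmf n p) {\<eta>. a < ?S \<eta>}
      \<le> measure_pmf.prob (interior_pmf n p) {\<eta> \<in> space (measure_pmf (interior_pmf n p)). r powr a \<le> r powr ?S \<eta>}"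
    by (intro measure_pmf.finite_measure_mono) auto
  also have "\<dots> \<le> measure_pmf.expectation (interior_pmf n p) (\<lambda>\<eta>. r powr ?S \<eta>) / r powr a"
    using r by (intro integral_Markov_inequality_measure[where A = UNIV])
      (auto intro: integrable_measure_pmf_finite finite_set_interior_pmf)
  also have "measure_pmf.expectation (interior_pmf n p) (\<lambda>\<eta>. r powr ?S \<eta>) = r"
    unfolding r_def by (rule expectation_powr_zero_walk[OF n _ p(2) i]) (use p in simp)
  also have "r / r powr a = r * r powr (-a)"
    by (simp add: powr_minus divide_inverse)
  finally show ?thesis .
qed

lemma prob_zero_walk_exceeds_le:
  assumes n: "n \<ge> 2" and p: "1/2 \<le> p" "p < 1"
  defines "r \<equiv> p / (1 - p)"
  shows "measure_pmf.prob (interior_pmf n p) {\<eta>. \<exists>i\<in>{1..n}. a < real_of_int (zero_walk (pin_ends n \<eta>) i)}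
           \<le> real n * r * r powr (-a)"
proof -
  let ?P = "measure_pmf.prob (interior_pmf n p)"
  define A where "A i = {\<eta>. a < real_of_int (zero_walk (pin_ends n \<eta>) i)}" for i
  have last: "zero_walk (pin_ends n \<eta>) n = zero_walk (pin_ends n \<eta>) (n - 1) - 1" for \<eta>
    using n by (cases n) (auto simp: zero_walk_def pin_ends_def)
  have "{\<eta>. \<exists>i\<in>{1..n}. a < real_of_int (zero_walk (pin_ends n \<eta>) i)} \<subseteq> (\<Union>i\<in>{1..<n}. A i)"
  proof safe
    fix \<eta> i assume i: "i \<in> {1..n}" and a: "a < real_of_int (zero_walk (pin_ends n \<eta>) i)"
    then have "\<eta> \<in> A (if i = n then n - 1 else i)"
      using last[of \<eta>] by (auto simp: A_def)
    moreover have "(if i = n then n - 1 else i) \<in> {1..<n}"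
      using i n by auto
    ultimately show "\<eta> \<in> (\<Union>i\<in>{1..<n}. A i)"
      by blast
  qed
  then have "?P {\<eta>. \<exists>i\<in>{1..n}. a < real_of_int (zero_walk (pin_ends n \<eta>) i)} \<le> ?P (\<Union>i\<in>{1..<n}. A i)"
    by (rule measure_pmf.finite_measure_mono) simp
  also have "\<dots> \<le> (\<Sum>i\<in>{1..<n}. ?P (A i))"
    by (rule measure_pmf.finite_measure_subadditive_finite) auto
  also have "\<dots> \<le> (\<Sum>i\<in>{1..<n}. r * r powr (-a))"
    using prob_zero_walk_gt_le[OF n p] by (intro sum_mono) (auto simp: A_def r_def)
  also have "\<dots> = real (n - 1) * (r * r powr (-a))"
    by simp
  also have "\<dots> \<le> real n * (r * r powr (-a))"
    using p by (intro mult_right_mono) (auto simp: r_def)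
  finally show ?thesis
    by (simp only: mult.assoc)
qed

section \<open>Characteristic functions\<close>

lemma norm_iexp_diff_le: "cmod (iexp u - iexp v) \<le> \<bar>u - v\<bar>"
proof -
  have "iexp u - iexp v = iexp v * (iexp (u - v) - 1)"
    by (simp add: algebra_simps flip: exp_add)
  moreover have "cmod (iexp (u - v) - 1) \<le> \<bar>u - v\<bar>"
    using iexp_approx1[of "u - v" 0] by simp
  ultimately show ?thesis
    by (simp add: norm_mult)
qed

lemma (in prob_space) char_distr_add_const:
  assumes "random_variable borel X"
  shows "char (distr M borel (\<lambda>x. c + X x)) t = iexp (t * c) * char (distr M borel X) t"
  using assms by (simp add: char_def integral_distr distrib_left exp_add)

lemma (in prob_space) norm_char_distr_diff_le:
  assumes [measurable]: "random_variable borel X" "random_variable borel Y"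
    and A: "A \<in> events" and "\<delta> \<ge> 0"
    and close: "\<And>x. x \<in> space M \<Longrightarrow> x \<notin> A \<Longrightarrow> \<bar>X x - Y x\<bar> \<le> \<delta>"
  shows "cmod (char (distr M borel X) t - char (distr M borel Y) t) \<le> \<bar>t\<bar> * \<delta> + 2 * prob A"
proof -
  have int: "integrable M (\<lambda>x. iexp (t * Z x))" if "random_variable borel Z" for Z
    using that by (intro integrable_iexp) auto
  have bound: "cmod (iexp (t * X x) - iexp (t * Y x)) \<le> \<bar>t\<bar> * \<delta> + 2 * indicator A x"
    if "x \<in> space M" for x
  proof (cases "x \<in> A")
    case True
    have "cmod (iexp (t * X x) - iexp (t * Y x)) \<le> cmod (iexp (t * X x)) + cmod (iexp (t * Y x))"
      by (rule norm_triangle_ineq4)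
    moreover have "0 \<le> \<bar>t\<bar> * \<delta>"
      using \<open>\<delta> \<ge> 0\<close> by simp
    ultimately show ?thesis
      using True by simp
  next
    case False
    have "cmod (iexp (t * X x) - iexp (t * Y x)) \<le> \<bar>t\<bar> * \<bar>X x - Y x\<bar>"
      using norm_iexp_diff_le[of "t * X x" "t * Y x"] by (simp add: abs_mult flip: right_diff_distrib)
    also have "\<dots> \<le> \<bar>t\<bar> * \<delta>"
      using close[OF that False] by (simp add: mult_left_mono)
    finally show ?thesis
      using False by simp
  qed
  have "char (distr M borel X) t - char (distr M borel Y) t = (CLINT x|M. iexp (t * X x) - iexp (t * Y x))"
    unfolding char_def using Bochner_Integration.integral_diff[OF int int, of X Y]
    by (simp add: integral_distr)
  also have "cmod \<dots> \<le> (\<integral>x. cmod (iexp (t * X x) - iexp (t * Y x)) \<partial>M)"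
    by (rule integral_norm_bound)
  also have "\<dots> \<le> (\<integral>x. \<bar>t\<bar> * \<delta> + 2 * indicator A x \<partial>M)"
    using A by (intro integral_mono integrable_norm Bochner_Integration.integrable_diff
        Bochner_Integration.integrable_add integrable_mult_right integrable_real_indicator int bound)
      (auto simp flip: less_top)
  also have "\<dots> = \<bar>t\<bar> * \<delta> + 2 * prob A"
    using A by (subst Bochner_Integration.integral_add) (auto simp: prob_space simp flip: less_top)
  finally show ?thesis .
qed

definition centred_bernoulli_char :: "real \<Rightarrow> real \<Rightarrow> complex" where
  "centred_bernoulli_char p s = of_real (1 - p) * iexp (- p * s) + of_real p * iexp ((1 - p) * s)"

lemma char_centred_bernoulli:
  assumes "0 \<le> p" "p \<le> 1"
  shows "char (distr (measure_pmf (bernoulli_pmf p)) borel (\<lambda>b. of_bool b - p)) s = centred_bernoulli_char p s"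
proof -
  have "char (distr (measure_pmf (bernoulli_pmf p)) borel (\<lambda>b. of_bool b - p)) s
      = (\<Sum>b\<in>UNIV. pmf (bernoulli_pmf p) b *\<^sub>R iexp (s * (of_bool b - p)))"
    unfolding char_def by (subst integral_distr) (auto intro: integral_measure_pmf)
  then show ?thesis
    using assms by (simp add: UNIV_bool scaleR_conv_of_real centred_bernoulli_char_def algebra_simps)
qed

lemma norm_centred_bernoulli_char_le: "0 \<le> p \<Longrightarrow> p \<le> 1 \<Longrightarrow> cmod (centred_bernoulli_char p s) \<le> 1"
  unfolding centred_bernoulli_char_def
  by (rule order_trans[OF norm_triangle_ineq]) (simp add: norm_mult del: of_real_diff)

lemma norm_iexp_sub_taylor2: "cmod (iexp x - (1 + \<i> * x - x\<^sup>2 / 2)) \<le> \<bar>x\<bar> ^ 3 / 6"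
proof -
  have "(\<Sum>k \<le> 2. (\<i> * complex_of_real x) ^ k / fact k) = 1 + \<i> * x - x\<^sup>2 / 2"
    by (simp add: numeral_2_eq_2 power2_eq_square field_simps)
  moreover have "fact 3 = (6::real)"
    by (simp add: fact_numeral)
  ultimately show ?thesis
    using iexp_approx1[of x 2] by (simp add: numeral_3_eq_3)
qed

lemma norm_centred_bernoulli_char_taylor:
  assumes "0 \<le> p" "p \<le> 1"
  shows "cmod (centred_bernoulli_char p s - (1 - p * (1 - p) * s\<^sup>2 / 2)) \<le> \<bar>s\<bar> ^ 3"
proof -
  define E where "E x = iexp x - (1 + \<i> * x - x\<^sup>2 / 2)" for x
  have small: "cmod (E (c * s)) \<le> \<bar>s\<bar> ^ 3 / 6" if "\<bar>c\<bar> \<le> 1" for c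
  proof -
    have "\<bar>c * s\<bar> ^ 3 \<le> \<bar>s\<bar> ^ 3"
      using that by (intro power_mono) (auto simp: abs_mult mult_left_le_one_le)
    then show ?thesis
      unfolding E_def by (rule order_trans[OF norm_iexp_sub_taylor2 divide_right_mono]) simp
  qed
  have "centred_bernoulli_char p s - (1 - p * (1 - p) * s\<^sup>2 / 2) = (1 - p) * E (- p * s) + p * E ((1 - p) * s)"
    by (simp add: centred_bernoulli_char_def E_def power2_eq_square field_simps)
  also have "cmod \<dots> \<le> (1 - p) * cmod (E (- p * s)) + p * cmod (E ((1 - p) * s))"
    by (rule order_trans[OF norm_triangle_ineq]) (use assms in \<open>simp add: norm_mult del: of_real_diff\<close>)
  also have "\<dots> \<le> (1 - p) * (\<bar>s\<bar> ^ 3 / 6) + p * (\<bar>s\<bar> ^ 3 / 6)"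
    using small[of "- p"] small[of "1 - p"] assms
    by (intro add_mono mult_left_mono) (auto simp: abs_mult)
  also have "\<dots> = \<bar>s\<bar> ^ 3 / 6"
    by (simp only: distrib_right[symmetric]) simp
  also have "\<dots> \<le> \<bar>s\<bar> ^ 3"
    by simp
  finally show ?thesis .
qed

lemma tendsto_one_plus_div_power: "(\<lambda>n. (1 + x / real n) ^ (n - k)) \<longlonglongrightarrow> exp x"
proof -
  have "(\<lambda>n. 1 + x / real n) \<longlonglongrightarrow> 1"
    by real_asymp
  then have "(\<lambda>n. (1 + x / real n) ^ k) \<longlonglongrightarrow> 1"
    using tendsto_power by fastforce
  then have "(\<lambda>n. (1 + x / real n) ^ n / (1 + x / real n) ^ k) \<longlonglongrightarrow> exp x / 1"
    by (intro tendsto_divide tendsto_exp_limit_sequentially) simp_all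
  moreover have "\<forall>\<^sub>F n in sequentially. (1 + x / real n) ^ n / (1 + x / real n) ^ k = (1 + x / real n) ^ (n - k)"
    using eventually_ge_at_top[of "max k (nat \<lceil>\<bar>x\<bar>\<rceil> + 1)"]
  proof eventually_elim
    case (elim n)
    then have "\<bar>x\<bar> < real n"
      by linarith
    then have "1 + x / real n \<noteq> 0"
      by (auto simp: field_simps split: abs_split)
    then show ?case
      using elim by (simp add: power_diff)
  qed
  ultimately show ?thesis
    by (simp add: tendsto_cong)
qed

lemma norm_centred_bernoulli_char_power_diff_le:
  assumes p: "0 \<le> p" "p \<le> 1" and s: "p * (1 - p) * s\<^sup>2 \<le> 4"
  shows "cmod (centred_bernoulli_char p s ^ m - of_real (1 - p * (1 - p) * s\<^sup>2 / 2) ^ m) \<le> real m * \<bar>s\<bar> ^ 3"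
proof -
  have "0 \<le> p * (1 - p) * s\<^sup>2"
    using p by simp
  then have "\<bar>1 - p * (1 - p) * s\<^sup>2 / 2\<bar> \<le> 1"
    using s by (simp add: abs_le_iff)
  then have "norm (complex_of_real (1 - p * (1 - p) * s\<^sup>2 / 2)) \<le> 1"
    by (simp only: norm_of_real)
  then have "cmod (centred_bernoulli_char p s ^ m - of_real (1 - p * (1 - p) * s\<^sup>2 / 2) ^ m)
      \<le> real m * cmod (centred_bernoulli_char p s - of_real (1 - p * (1 - p) * s\<^sup>2 / 2))"
    by (intro norm_power_diff norm_centred_bernoulli_char_le p)
  also have "\<dots> \<le> real m * \<bar>s\<bar> ^ 3"
    using norm_centred_bernoulli_char_taylor[OF p] by (intro mult_left_mono) auto
  finally show ?thesis .
qed

lemma tendsto_centred_bernoulli_char_power: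
  assumes "0 \<le> p" "p \<le> 1"
  shows "(\<lambda>n. centred_bernoulli_char p (t / sqrt (real n)) ^ (n - k))
           \<longlonglongrightarrow> of_real (exp (- p * (1 - p) * t\<^sup>2 / 2))"
proof -
  define x where "x = - p * (1 - p) * t\<^sup>2 / 2"
  define q where "q n = 1 + x / real n" for n
  have "(\<lambda>n. centred_bernoulli_char p (t / sqrt (real n)) ^ (n - k) - of_real (q n) ^ (n - k)) \<longlonglongrightarrow> 0"
  proof (rule Lim_null_comparison)
    show "(\<lambda>n. \<bar>t\<bar> ^ 3 / sqrt (real n)) \<longlonglongrightarrow> 0"
      by real_asymp
    have "\<forall>\<^sub>F n in sequentially. p * (1 - p) * t\<^sup>2 / real n \<le> 4"
      by real_asymp
    then show "\<forall>\<^sub>F n in sequentially.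
        norm (centred_bernoulli_char p (t / sqrt (real n)) ^ (n - k) - of_real (q n) ^ (n - k)) \<le> \<bar>t\<bar> ^ 3 / sqrt (real n)"
      using eventually_gt_at_top[of 0]
    proof eventually_elim
      case (elim n)
      let ?s = "t / sqrt (real n)"
      have "?s\<^sup>2 = t\<^sup>2 / real n"
        using elim by (simp add: power_divide)
      then have "q n = 1 - p * (1 - p) * ?s\<^sup>2 / 2" and "p * (1 - p) * ?s\<^sup>2 \<le> 4"
        using elim by (simp_all add: q_def x_def)
      then have "norm (centred_bernoulli_char p ?s ^ (n - k) - of_real (q n) ^ (n - k)) \<le> real (n - k) * \<bar>?s\<bar> ^ 3"
        using norm_centred_bernoulli_char_power_diff_le[OF assms] by presburger
      also have "\<dots> \<le> real n * \<bar>?s\<bar> ^ 3"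
        by (intro mult_right_mono) auto
      also have "\<dots> = \<bar>t\<bar> ^ 3 / sqrt (real n)"
        using elim by (simp add: abs_div power_divide power3_eq_cube field_simps)
      finally show ?case .
    qed
  qed
  then have "(\<lambda>n. of_real (q n ^ (n - k)) + (centred_bernoulli_char p (t / sqrt (real n)) ^ (n - k) - of_real (q n) ^ (n - k)))
      \<longlonglongrightarrow> of_real (exp x) + 0"
    unfolding q_def by (intro tendsto_add tendsto_of_real tendsto_one_plus_div_power)
  then show ?thesis
    by (simp add: x_def)
qed

lemma char_normal_density:
  assumes "\<sigma> > 0"
  shows "char (density lborel (normal_density 0 \<sigma>)) t = exp (- (\<sigma> * t)\<^sup>2 / 2)"
proof -
  interpret std: prob_space std_normal_distribution
    using real_dist_normal_dist by (simp add: real_distribution_def)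
  have "distributed std_normal_distribution lborel (\<lambda>x. x) (normal_density 0 1)"
    unfolding distributed_def by (auto simp: distr_id2)
  then have "distributed std_normal_distribution lborel (\<lambda>x. 0 + \<sigma> * x) (normal_density (0 + \<sigma> * 0) (\<bar>\<sigma>\<bar> * 1))"
    by (rule std.normal_density_affine) (use assms in auto)
  then have "density lborel (normal_density 0 \<sigma>) = distr std_normal_distribution lborel (\<lambda>x. \<sigma> * x)"
    using assms by (simp add: distributed_def)
  then have "char (density lborel (normal_density 0 \<sigma>)) t = char std_normal_distribution (\<sigma> * t)"
    unfolding char_def by (simp add: integral_distr mult.assoc mult.left_commute)
  then show ?thesis
    by (simp add: char_std_normal_distribution)
qed

section \<open>Convergence of the normalised sorting time\<close>

definition T_stat :: "nat \<Rightarrow> real \<Rightarrow> (nat \<Rightarrow> bool) \<Rightarrow> real" where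
  "T_stat n p \<omega> = (real (T_steps n \<omega>) - real n * p) / sqrt (real n)"

definition ones_stat :: "nat \<Rightarrow> real \<Rightarrow> (nat \<Rightarrow> bool) \<Rightarrow> real" where
  "ones_stat n p \<omega> = (real (n - zero_count \<omega> n) - real n * p) / sqrt (real n)"

lemma char_ones_stat:
  assumes n: "n \<ge> 2" and p: "0 \<le> p" "p \<le> 1"
  shows "char (distr (measure_pmf (strings_pmf n p)) borel (ones_stat n p)) t
           = iexp (t * ((1 - 2 * p) / sqrt (real n))) * centred_bernoulli_char p (t / sqrt (real n)) ^ (n - 2)"
proof -
  let ?M = "measure_pmf (interior_pmf n p)"
  define X where "X k \<eta> = (of_bool (\<eta> k) - p) / sqrt (real n)" for k and \<eta> :: "nat \<Rightarrow> bool"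
  have "ones_stat n p \<circ> pin_ends n = (\<lambda>\<eta>. (1 - 2 * p) / sqrt (real n) + (\<Sum>k\<in>{2..<n}. X k \<eta>))"
    using n by (auto simp: fun_eq_iff ones_stat_def ones_pin_ends X_def sum_subtractf algebra_simps
        simp flip: sum_divide_distrib add_divide_distrib diff_divide_distrib)
  moreover have "prob_space.indep_vars ?M (\<lambda>_. borel) X {2..<n}"
  proof -
    have "prob_space.indep_vars ?M (\<lambda>_. count_space UNIV) (\<lambda>k f. f k) {2..<n}"
      unfolding interior_pmf_def by (rule indep_vars_Pi_pmf) simp
    then show ?thesis
      unfolding X_def
      by (rule prob_space.indep_vars_compose2[OF measure_pmf.prob_space_axioms,
            where Y = "\<lambda>k b. (of_bool b - p) / sqrt (real n)", simplified]) auto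
  qed
  moreover have "char (distr ?M borel (X k)) t = centred_bernoulli_char p (t / sqrt (real n))"
    if "k \<in> {2..<n}" for k
  proof -
    have "char (distr ?M borel (X k)) t = (CLINT \<eta>|?M. iexp (t / sqrt (real n) * (of_bool (\<eta> k) - p)))"
      unfolding char_def X_def by (simp add: integral_distr)
    also have "\<dots> = (CLINT b|measure_pmf (map_pmf (\<lambda>f. f k) (interior_pmf n p)). iexp (t / sqrt (real n) * (of_bool b - p)))"
      by simp
    also have "map_pmf (\<lambda>f. f k) (interior_pmf n p) = bernoulli_pmf p"
      unfolding interior_pmf_def using that by (subst Pi_pmf_component) auto
    finally have "char (distr ?M borel (X k)) t
        = char (distr (measure_pmf (bernoulli_pmf p)) borel (\<lambda>b. of_bool b - p)) (t / sqrt (real n))"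
      unfolding char_def by (simp add: integral_distr)
    then show ?thesis
      using p by (simp add: char_centred_bernoulli)
  qed
  ultimately show ?thesis
    using n by (simp add: distr_strings_pmf prob_space.char_distr_add_const prob_space.char_distr_sum
        measure_pmf.prob_space_axioms)
qed

lemma tendsto_char_ones_stat:
  assumes "0 \<le> p" "p \<le> 1"
  shows "(\<lambda>n. char (distr (measure_pmf (strings_pmf n p)) borel (ones_stat n p)) t)
           \<longlonglongrightarrow> exp (- p * (1 - p) * t\<^sup>2 / 2)"
proof -
  have "(\<lambda>n. t * ((1 - 2 * p) / sqrt (real n))) \<longlonglongrightarrow> 0"
    by real_asymp
  then have "(\<lambda>n. iexp (t * ((1 - 2 * p) / sqrt (real n))) * centred_bernoulli_char p (t / sqrt (real n)) ^ (n - 2))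
      \<longlonglongrightarrow> iexp 0 * exp (- p * (1 - p) * t\<^sup>2 / 2)"
    by (intro tendsto_intros tendsto_centred_bernoulli_char_power assms)
  moreover have "\<forall>\<^sub>F n in sequentially. iexp (t * ((1 - 2 * p) / sqrt (real n))) * centred_bernoulli_char p (t / sqrt (real n)) ^ (n - 2)
      = char (distr (measure_pmf (strings_pmf n p)) borel (ones_stat n p)) t"
    using eventually_ge_at_top[of 2] by eventually_elim (simp add: char_ones_stat assms)
  ultimately show ?thesis
    by (simp add: tendsto_cong)
qed

lemma norm_char_T_stat_sub_ones_stat_le:
  assumes n: "n \<ge> 2" and p: "1/2 \<le> p" "p < 1" and "a \<ge> 0"
  defines "r \<equiv> p / (1 - p)"
  shows "cmod (char (distr (measure_pmf (strings_pmf n p)) borel (T_stat n p)) t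
               - char (distr (measure_pmf (strings_pmf n p)) borel (ones_stat n p)) t)
           \<le> \<bar>t\<bar> * (a / sqrt (real n)) + 2 * (real n * r * r powr (-a))"
proof -
  define bad where "bad = {\<eta>. \<exists>i\<in>{1..n}. a < real_of_int (zero_walk (pin_ends n \<eta>) i)}"
  have "\<bar>T_stat n p (pin_ends n \<eta>) - ones_stat n p (pin_ends n \<eta>)\<bar> \<le> a / sqrt (real n)"
    if "\<eta> \<notin> bad" for \<eta>
  proof -
    let ?\<omega> = "pin_ends n \<eta>"
    have walk: "\<forall>i\<in>{1..n}. zero_walk ?\<omega> i \<le> int (nat \<lfloor>a\<rfloor>)"
      using that \<open>a \<ge> 0\<close> by (auto simp: bad_def le_floor_iff not_less)
    have "\<not> ?\<omega> 1"
      using n by (simp add: pin_ends_def)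
    then have "n - zero_count ?\<omega> n \<le> T_steps n ?\<omega>" "T_steps n ?\<omega> \<le> n - zero_count ?\<omega> n + nat \<lfloor>a\<rfloor>"
      using T_steps_bounds[OF _ _ walk] n by auto
    moreover have "real (nat \<lfloor>a\<rfloor>) \<le> a"
      using \<open>a \<ge> 0\<close> by simp
    ultimately have "\<bar>real (T_steps n ?\<omega>) - real (n - zero_count ?\<omega> n)\<bar> \<le> a"
      by linarith
    then show ?thesis
      by (simp add: T_stat_def ones_stat_def abs_div divide_right_mono flip: diff_divide_distrib)
  qed
  then have "cmod (char (distr (measure_pmf (interior_pmf n p)) borel (T_stat n p \<circ> pin_ends n)) t
               - char (distr (measure_pmf (interior_pmf n p)) borel (ones_stat n p \<circ> pin_ends n)) t)
           \<le> \<bar>t\<bar> * (a / sqrt (real n)) + 2 * measure_pmf.prob (interior_pmf n p) bad"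
    using \<open>a \<ge> 0\<close> by (intro measure_pmf.norm_char_distr_diff_le) auto
  also have "\<dots> \<le> \<bar>t\<bar> * (a / sqrt (real n)) + 2 * (real n * r * r powr (-a))"
    unfolding bad_def r_def using prob_zero_walk_exceeds_le[OF n p, of a] by linarith
  finally show ?thesis
    by (simp add: distr_strings_pmf)
qed

lemma tendsto_char_T_stat_sub_ones_stat:
  assumes "1/2 < p" "p < 1"
  shows "(\<lambda>n. char (distr (measure_pmf (strings_pmf n p)) borel (T_stat n p)) t
               - char (distr (measure_pmf (strings_pmf n p)) borel (ones_stat n p)) t) \<longlonglongrightarrow> 0"
proof (rule Lim_null_comparison)
  define r where "r = p / (1 - p)"
  have "r > 1"
    using assms by (simp add: r_def)
  then show "(\<lambda>n. \<bar>t\<bar> * (real n powr (1/4) / sqrt (real n)) + 2 * (real n * r * r powr (- (real n powr (1/4))))) \<longlonglongrightarrow> 0"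
    by real_asymp
  show "\<forall>\<^sub>F n in sequentially.
      norm (char (distr (measure_pmf (strings_pmf n p)) borel (T_stat n p)) t
            - char (distr (measure_pmf (strings_pmf n p)) borel (ones_stat n p)) t)
      \<le> \<bar>t\<bar> * (real n powr (1/4) / sqrt (real n)) + 2 * (real n * r * r powr (- (real n powr (1/4))))"
    using eventually_ge_at_top[of 2]
    by eventually_elim
      (intro norm_char_T_stat_sub_ones_stat_le[OF _ less_imp_le[OF assms(1)] assms(2), folded r_def]; simp)
qed

lemma tendsto_char_T_stat:
  assumes "1/2 < p" "p < 1"
  shows "(\<lambda>n. char (distr (measure_pmf (strings_pmf n p)) borel (T_stat n p)) t)
           \<longlonglongrightarrow> exp (- p * (1 - p) * t\<^sup>2 / 2)"
proof -
  have "(\<lambda>n. char (distr (measure_pmf (strings_pmf n p)) borel (ones_stat n p)) t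
          + (char (distr (measure_pmf (strings_pmf n p)) borel (T_stat n p)) t
             - char (distr (measure_pmf (strings_pmf n p)) borel (ones_stat n p)) t))
        \<longlonglongrightarrow> of_real (exp (- p * (1 - p) * t\<^sup>2 / 2)) + 0"
    using assms by (intro tendsto_add tendsto_char_ones_stat tendsto_char_T_stat_sub_ones_stat) auto
  then show ?thesis
    by simp
qed

theorem lemma3p3:
  fixes p :: real
  assumes "1/2 < p" and "p < 1"
  shows "weak_conv_m
           (\<lambda>n. distr (measure_pmf (strings_pmf n p)) borel
                   (\<lambda>\<omega>. (real (T_steps n \<omega>) - real n * p) / sqrt (real n)))
           (density lborel (normal_density 0 (sqrt (p * (1 - p)))))"
proof -
  have \<sigma>: "sqrt (p * (1 - p)) > 0"
    using assms by simp
  have "weak_conv_m (\<lambda>n. distr (measure_pmf (strings_pmf n p)) borel (T_stat n p))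
           (density lborel (normal_density 0 (sqrt (p * (1 - p)))))"
  proof (rule levy_continuity)
    show "real_distribution (distr (measure_pmf (strings_pmf n p)) borel (T_stat n p))" for n
      by (simp add: prob_space.real_distribution_distr measure_pmf.prob_space_axioms)
    show "real_distribution (density lborel (normal_density 0 (sqrt (p * (1 - p)))))"
      using \<sigma> by (simp add: real_distribution_def real_distribution_axioms_def prob_space_normal_density)
    show "(\<lambda>n. char (distr (measure_pmf (strings_pmf n p)) borel (T_stat n p)) t)
        \<longlonglongrightarrow> char (density lborel (normal_density 0 (sqrt (p * (1 - p))))) t" for t
      using tendsto_char_T_stat[OF assms, of t] assms
      by (simp add: char_normal_density[OF \<sigma>] power_mult_distrib)
  qed
  then show ?thesis
    by (simp add: T_stat_def[abs_def])
qed

end
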